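(* Let $\mathcal A=\bigoplus_{k=1}^\ell M_{n_k}(\mathbb C)$, let $i\neq j$, and let $x_ix_i^\ast\in M_{n_i}(\mathbb C)$ and $x_jx_j^\ast\in M_{n_j}(\mathbb C)$ be rank-one matrices of norm one. For a unimodular $\mu\in\mathbb C$, let $R_\mu\in\mathcal A$ be the element whose $i$-th block is $x_ix_i^\ast$, whose $j$-th block is $\mu x_jx_j^\ast$, and whose other blocks are zero. Then there is a unique unimodular $\mu$ such that $R_\mu\perp I$, namely $\mu=-1$.
   Context: $\mathcal A$ is the $C^\ast$-algebra of block-diagonal matrices with the operator norm, $I$ its identity. $X\perp Y$ (Birkhoff–James orthogonality) means $\|X+\lambda Y\|\ge\|X\|$ for all $\lambda\in\mathbb C$. *)

theory Defs
  imports Complex_Main "Jordan_Normal_Form.Matrix"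
begin

definition vnorm :: "complex vec \<Rightarrow> real" where
  "vnorm v = sqrt (\<Sum>a<dim_vec v. (cmod (v $ a))\<^sup>2)"

definition op_norm :: "complex mat \<Rightarrow> real" where
  "op_norm M = Sup {vnorm (M *\<^sub>v v) | v. v \<in> carrier_vec (dim_col M) \<and> vnorm v \<le> 1}"

definition outer :: "complex vec \<Rightarrow> complex mat" where
  "outer x = mat (dim_vec x) (dim_vec x) (\<lambda>(a,b). x $ a * cnj (x $ b))"

text \<open>Elements of the block-diagonal algebra  M_{n_0} + ... + M_{n_(l-1)}  are represented by
  their blocks  B :: nat \<Rightarrow> complex mat  (block k of size ns k, k < l).
  The operator norm of a block-diagonal matrix is the maximum of the block operator norms.\<close>
definition blk_norm :: "nat \<Rightarrow> (nat \<Rightarrow> complex mat) \<Rightarrow> real" where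
  "blk_norm l B = Max {op_norm (B k) | k. k < l}"

definition blk_add :: "(nat \<Rightarrow> complex mat) \<Rightarrow> (nat \<Rightarrow> complex mat) \<Rightarrow> (nat \<Rightarrow> complex mat)" where
  "blk_add B C = (\<lambda>k. B k + C k)"

definition blk_smult :: "complex \<Rightarrow> (nat \<Rightarrow> complex mat) \<Rightarrow> (nat \<Rightarrow> complex mat)" where
  "blk_smult c B = (\<lambda>k. c \<cdot>\<^sub>m B k)"

definition blk_id :: "(nat \<Rightarrow> nat) \<Rightarrow> (nat \<Rightarrow> complex mat)" where
  "blk_id ns = (\<lambda>k. 1\<^sub>m (ns k))"

definition BJ_orth :: "nat \<Rightarrow> (nat \<Rightarrow> complex mat) \<Rightarrow> (nat \<Rightarrow> complex mat) \<Rightarrow> bool" where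
  "BJ_orth l X Y \<longleftrightarrow> (\<forall>c::complex. blk_norm l (blk_add X (blk_smult c Y)) \<ge> blk_norm l X)"

end

(*
  For a unit vector x the matrix \<mu> x x* + c I acts as \<mu> + c on x and as c on the orthogonal
  complement of x, so its operator norm lies between |\<mu> + c| and max |\<mu> + c| |c|.  Hence
  R\<^sub>\<mu> has norm 1 and R\<^sub>\<mu> + c I has norm at least max |1 + c| |\<mu> + c|.  For \<mu> = -1 this is
  at least 1 for every c, since |1 + c| + |1 - c| \<ge> 2.  For any other unimodular \<mu> the
  shift c = -(1 + \<mu>)/4 brings all three quantities |1 + c|, |\<mu> + c|, |c| below 1.
*)
theory Submission imports Defs "HOL-Analysis.L2_Norm" begin

lemma vnorm_nonneg: "vnorm v \<ge> 0"
  unfolding vnorm_def by (simp add: sum_nonneg)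

lemma vnorm_sq: "(vnorm v)\<^sup>2 = (\<Sum>a<dim_vec v. (cmod (v $ a))\<^sup>2)"
  unfolding vnorm_def by (simp add: sum_nonneg)

lemma vnorm_smult: "vnorm (c \<cdot>\<^sub>v v) = cmod c * vnorm v"
  unfolding vnorm_def
  by (simp add: norm_mult power_mult_distrib sum_distrib_left[symmetric] real_sqrt_mult)

lemma sum_mult_cnj_self_eq_vnorm_sq:
  assumes "x \<in> carrier_vec n"
  shows "(\<Sum>a<n. x $ a * cnj (x $ a)) = of_real ((vnorm x)\<^sup>2)"
  using assms by (simp add: vnorm_sq complex_norm_square[symmetric])

lemma norm_sum_cnj_mult_le_vnorm:
  assumes "x \<in> carrier_vec n" "v \<in> carrier_vec n"
  shows "cmod (\<Sum>b<n. cnj (x $ b) * v $ b) \<le> vnorm x * vnorm v"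
proof -
  have "cmod (\<Sum>b<n. cnj (x $ b) * v $ b) \<le> (\<Sum>b<n. cmod (x $ b) * cmod (v $ b))"
    by (rule order_trans[OF norm_sum]) (simp add: norm_mult)
  also have "\<dots> \<le> L2_set (\<lambda>b. cmod (x $ b)) {..<n} * L2_set (\<lambda>b. cmod (v $ b)) {..<n}"
    using L2_set_mult_ineq[of "\<lambda>b. cmod (x $ b)" "\<lambda>b. cmod (v $ b)" "{..<n}"] by simp
  finally show ?thesis
    using assms by (simp add: vnorm_def L2_set_def)
qed

lemma op_norm_le:
  assumes "\<And>v. v \<in> carrier_vec (dim_col M) \<Longrightarrow> vnorm v \<le> 1 \<Longrightarrow> vnorm (M *\<^sub>v v) \<le> B"
  shows "op_norm M \<le> B"
  unfolding op_norm_def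
proof (rule cSup_least)
  show "{vnorm (M *\<^sub>v v) |v. v \<in> carrier_vec (dim_col M) \<and> vnorm v \<le> 1} \<noteq> {}"
    by (auto intro!: exI[of _ "0\<^sub>v (dim_col M)"] simp: vnorm_def)
qed (use assms in auto)

lemma vnorm_mult_vec_le_op_norm:
  assumes "\<And>v. v \<in> carrier_vec (dim_col M) \<Longrightarrow> vnorm v \<le> 1 \<Longrightarrow> vnorm (M *\<^sub>v v) \<le> B"
    and "v \<in> carrier_vec (dim_col M)" "vnorm v \<le> 1"
  shows "vnorm (M *\<^sub>v v) \<le> op_norm M"
  unfolding op_norm_def by (rule cSup_upper) (use assms in \<open>auto intro!: bdd_aboveI\<close>)

lemma op_norm_le_scalar:
  assumes "\<And>v. v \<in> carrier_vec (dim_col M) \<Longrightarrow> M *\<^sub>v v = c \<cdot>\<^sub>v v"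
  shows "op_norm M \<le> cmod c"
  by (rule op_norm_le) (use assms in \<open>simp add: vnorm_smult mult_left_le\<close>)

lemma dim_outer [simp]: "dim_row (outer x) = dim_vec x" "dim_col (outer x) = dim_vec x"
  by (simp_all add: outer_def)

lemma outer_mult_vec:
  assumes "x \<in> carrier_vec n" "v \<in> carrier_vec n"
  shows "outer x *\<^sub>v v = (\<Sum>b<n. cnj (x $ b) * v $ b) \<cdot>\<^sub>v x"
  using assms
  by (intro eq_vecI)
    (auto simp: outer_def scalar_prod_def sum_distrib_left atLeast0LessThan algebra_simps)

lemma op_norm_outer:
  assumes x: "x \<in> carrier_vec n"
  shows "op_norm (outer x) = (vnorm x)\<^sup>2"
proof (rule antisym)
  have bound: "vnorm (outer x *\<^sub>v v) \<le> (vnorm x)\<^sup>2"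
    if "v \<in> carrier_vec (dim_col (outer x))" "vnorm v \<le> 1" for v
  proof -
    have "vnorm (outer x *\<^sub>v v) = cmod (\<Sum>b<n. cnj (x $ b) * v $ b) * vnorm x"
      using x that by (simp add: outer_mult_vec vnorm_smult)
    also have "\<dots> \<le> (vnorm x * vnorm v) * vnorm x"
      using x that by (intro mult_right_mono norm_sum_cnj_mult_le_vnorm) (auto simp: vnorm_nonneg)
    also have "\<dots> \<le> (vnorm x)\<^sup>2"
      using that mult_left_le[of "vnorm v" "vnorm x * vnorm x"]
      by (simp add: power2_eq_square algebra_simps)
    finally show ?thesis .
  qed
  then show "op_norm (outer x) \<le> (vnorm x)\<^sup>2"
    by (rule op_norm_le)
  \<comment> \<open>test on x / |x|, which is the zero vector when x = 0 since 1 / 0 = 0\<close>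
  define v where "v = of_real (1 / vnorm x) \<cdot>\<^sub>v x"
  have v: "v \<in> carrier_vec (dim_col (outer x))" "vnorm v \<le> 1"
    using x vnorm_nonneg[of x] by (auto simp: v_def vnorm_smult norm_divide)
  have "(\<Sum>b<n. cnj (x $ b) * v $ b) = of_real (1 / vnorm x) * (\<Sum>b<n. x $ b * cnj (x $ b))"
    using x by (simp add: v_def sum_distrib_left algebra_simps)
  also have "\<dots> = of_real (vnorm x)"
    using sum_mult_cnj_self_eq_vnorm_sq[OF x] by (simp add: power2_eq_square)
  finally have "vnorm (outer x *\<^sub>v v) = (vnorm x)\<^sup>2"
    using x v vnorm_nonneg[of x] by (simp add: outer_mult_vec vnorm_smult power2_eq_square)
  with bound v show "(vnorm x)\<^sup>2 \<le> op_norm (outer x)"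
    using vnorm_mult_vec_le_op_norm by metis
qed

lemma vnorm_lincomb_sq:
  assumes "x \<in> carrier_vec n" "v \<in> carrier_vec n"
  shows "of_real ((vnorm (a \<cdot>\<^sub>v x + b \<cdot>\<^sub>v v))\<^sup>2)
    = a * cnj a * of_real ((vnorm x)\<^sup>2) + a * cnj b * (\<Sum>k<n. x $ k * cnj (v $ k))
      + b * cnj a * cnj (\<Sum>k<n. x $ k * cnj (v $ k)) + b * cnj b * of_real ((vnorm v)\<^sup>2)"
proof -
  have "of_real ((vnorm (a \<cdot>\<^sub>v x + b \<cdot>\<^sub>v v))\<^sup>2)
      = (\<Sum>k<n. (a \<cdot>\<^sub>v x + b \<cdot>\<^sub>v v) $ k * cnj ((a \<cdot>\<^sub>v x + b \<cdot>\<^sub>v v) $ k))"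
    using assms by (intro sum_mult_cnj_self_eq_vnorm_sq[symmetric]) simp
  also have "\<dots> = (\<Sum>k<n. (a * x $ k + b * v $ k) * cnj (a * x $ k + b * v $ k))"
    using assms by simp
  also have "\<dots> = a * cnj a * (\<Sum>k<n. x $ k * cnj (x $ k))
      + a * cnj b * (\<Sum>k<n. x $ k * cnj (v $ k))
      + b * cnj a * (\<Sum>k<n. v $ k * cnj (x $ k))
      + b * cnj b * (\<Sum>k<n. v $ k * cnj (v $ k))"
    by (simp add: sum_distrib_left sum.distrib algebra_simps)
  finally show ?thesis
    using assms by (simp add: sum_mult_cnj_self_eq_vnorm_sq mult.commute)
qed

lemma rank_one_shift_mult_vec:
  assumes "x \<in> carrier_vec n" "v \<in> carrier_vec n"
  shows "(\<mu> \<cdot>\<^sub>m outer x + c \<cdot>\<^sub>m 1\<^sub>m n) *\<^sub>v v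
    = (\<mu> * (\<Sum>b<n. cnj (x $ b) * v $ b)) \<cdot>\<^sub>v x + c \<cdot>\<^sub>v v"
  using assms
  by (intro eq_vecI)
    (auto simp: outer_def scalar_prod_def sum_distrib_left atLeast0LessThan algebra_simps
      sum.distrib if_distrib[of "(*) _"] cong: if_cong)

lemma vnorm_rank_one_shift_mult_vec_sq:
  assumes x: "x \<in> carrier_vec n" and v: "v \<in> carrier_vec n" and x_unit: "vnorm x = 1"
  shows "(vnorm ((\<mu> \<cdot>\<^sub>m outer x + c \<cdot>\<^sub>m 1\<^sub>m n) *\<^sub>v v))\<^sup>2
    = (cmod (\<Sum>b<n. cnj (x $ b) * v $ b))\<^sup>2 * ((cmod (\<mu> + c))\<^sup>2 - (cmod c)\<^sup>2)
      + (cmod c)\<^sup>2 * (vnorm v)\<^sup>2"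
proof -
  define s where "s = (\<Sum>b<n. cnj (x $ b) * v $ b)"
  have "(\<Sum>k<n. x $ k * cnj (v $ k)) = cnj s"
    by (simp add: s_def mult.commute)
  then have "of_real ((vnorm ((\<mu> \<cdot>\<^sub>m outer x + c \<cdot>\<^sub>m 1\<^sub>m n) *\<^sub>v v))\<^sup>2)
      = \<mu> * s * cnj (\<mu> * s) + \<mu> * s * cnj c * cnj s + c * cnj (\<mu> * s) * s
        + c * cnj c * of_real ((vnorm v)\<^sup>2)"
    using vnorm_lincomb_sq[OF x v, of "\<mu> * s" c] x v x_unit
    by (simp add: rank_one_shift_mult_vec s_def)
  also have "\<dots> = of_real ((cmod s)\<^sup>2 * ((cmod (\<mu> + c))\<^sup>2 - (cmod c)\<^sup>2)
      + (cmod c)\<^sup>2 * (vnorm v)\<^sup>2)"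
    by (simp only: of_real_add of_real_mult of_real_diff complex_norm_square)
      (simp add: algebra_simps)
  finally show ?thesis
    unfolding s_def of_real_eq_iff .
qed

lemma vnorm_rank_one_shift_mult_vec_le:
  assumes x: "x \<in> carrier_vec n" and x_unit: "vnorm x = 1"
    and v: "v \<in> carrier_vec n" and v_le: "vnorm v \<le> 1"
  shows "vnorm ((\<mu> \<cdot>\<^sub>m outer x + c \<cdot>\<^sub>m 1\<^sub>m n) *\<^sub>v v) \<le> max (cmod (\<mu> + c)) (cmod c)"
proof -
  define S where "S = (cmod (\<Sum>b<n. cnj (x $ b) * v $ b))\<^sup>2"
  define V where "V = (vnorm v)\<^sup>2"
  define A where "A = (cmod (\<mu> + c))\<^sup>2"
  define C where "C = (cmod c)\<^sup>2"
  have "S \<le> V"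
    using norm_sum_cnj_mult_le_vnorm[OF x v] x_unit
    by (simp add: S_def V_def power_mono)
  have "V \<le> 1"
    using v_le vnorm_nonneg[of v] by (simp add: V_def power_le_one)
  have "0 \<le> S" "0 \<le> max A C"
    by (simp_all add: S_def C_def le_max_iff_disj)
  have "(vnorm ((\<mu> \<cdot>\<^sub>m outer x + c \<cdot>\<^sub>m 1\<^sub>m n) *\<^sub>v v))\<^sup>2 = S * A + (V - S) * C"
    unfolding S_def V_def A_def C_def vnorm_rank_one_shift_mult_vec_sq[OF x v x_unit]
    by (simp add: algebra_simps)
  \<comment> \<open>a combination of A and C with nonnegative weights of total V\<close>
  also have "\<dots> \<le> S * max A C + (V - S) * max A C"
    using \<open>S \<le> V\<close> \<open>0 \<le> S\<close> by (intro add_mono mult_left_mono) auto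
  also have "\<dots> = V * max A C"
    by (simp add: algebra_simps)
  also have "\<dots> \<le> max A C"
    using \<open>V \<le> 1\<close> \<open>0 \<le> max A C\<close> by (metis mult.commute mult_left_le)
  also have "\<dots> = (max (cmod (\<mu> + c)) (cmod c))\<^sup>2"
    unfolding A_def C_def by (simp add: max_def power_mono)
  finally show ?thesis
    by (rule power2_le_imp_le) (simp add: le_max_iff_disj)
qed

lemma op_norm_rank_one_shift_le:
  assumes "x \<in> carrier_vec n" "vnorm x = 1"
  shows "op_norm (\<mu> \<cdot>\<^sub>m outer x + c \<cdot>\<^sub>m 1\<^sub>m n) \<le> max (cmod (\<mu> + c)) (cmod c)"
  by (rule op_norm_le) (use assms vnorm_rank_one_shift_mult_vec_le in auto)

lemma norm_add_le_op_norm_rank_one_shift: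
  assumes x: "x \<in> carrier_vec n" and x_unit: "vnorm x = 1"
  shows "cmod (\<mu> + c) \<le> op_norm (\<mu> \<cdot>\<^sub>m outer x + c \<cdot>\<^sub>m 1\<^sub>m n)"
proof -
  have "(\<Sum>b<n. cnj (x $ b) * x $ b) = 1"
    using sum_mult_cnj_self_eq_vnorm_sq[OF x] x_unit by (simp add: mult.commute)
  then have "(vnorm ((\<mu> \<cdot>\<^sub>m outer x + c \<cdot>\<^sub>m 1\<^sub>m n) *\<^sub>v x))\<^sup>2 = (cmod (\<mu> + c))\<^sup>2"
    using vnorm_rank_one_shift_mult_vec_sq[OF x x x_unit, of \<mu> c] x_unit by simp
  then have "cmod (\<mu> + c) = vnorm ((\<mu> \<cdot>\<^sub>m outer x + c \<cdot>\<^sub>m 1\<^sub>m n) *\<^sub>v x)"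
    using vnorm_nonneg by (metis norm_ge_zero power2_eq_iff_nonneg)
  also have "\<dots> \<le> op_norm (\<mu> \<cdot>\<^sub>m outer x + c \<cdot>\<^sub>m 1\<^sub>m n)"
    by (rule vnorm_mult_vec_le_op_norm) (use x x_unit vnorm_rank_one_shift_mult_vec_le in auto)
  finally show ?thesis .
qed

lemma op_norm_le_blk_norm: "k < l \<Longrightarrow> op_norm (B k) \<le> blk_norm l B"
  unfolding blk_norm_def by (rule Max_ge) (auto simp: setcompr_eq_image)

lemma blk_norm_le: "0 < l \<Longrightarrow> (\<And>k. k < l \<Longrightarrow> op_norm (B k) \<le> b) \<Longrightarrow> blk_norm l B \<le> b"
  unfolding blk_norm_def by (subst Max_le_iff) (auto simp: setcompr_eq_image)

lemma exists_shift_norms_lt_one: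
  assumes "cmod \<mu> = 1" "\<mu> \<noteq> -1"
  shows "\<exists>c. cmod (1 + c) < 1 \<and> cmod (\<mu> + c) < 1 \<and> cmod c < 1"
proof -
  obtain a b where ab: "\<mu> = Complex a b"
    by (cases \<mu>)
  have unit: "b * b = 1 - a * a"
    using assms(1) cmod_power2[of \<mu>] by (simp add: ab power2_eq_square)
  have "a \<noteq> -1"
    using unit assms(2) by (auto simp: ab complex_eq_iff)
  moreover have "-1 \<le> a"
    using abs_Re_le_cmod[of \<mu>] assms(1) by (simp add: ab)
  ultimately have "-1 < a" by simp
  have lt_one: "cmod z < 1" if "(Re z)\<^sup>2 + (Im z)\<^sup>2 < 1" for z
    using that by (simp add: cmod_def)
  define c where "c = - ((1 + \<mu>) / 4)"
  \<comment> \<open>|1 + c|^2 = |\<mu> + c|^2 = (10 - 6 Re \<mu>) / 16\<close>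
  from unit \<open>-1 < a\<close> have "cmod (1 + c) < 1" "cmod (\<mu> + c) < 1"
    by (intro lt_one; simp add: c_def ab power2_eq_square field_simps)+
  moreover have "cmod c < 1"
    using norm_triangle_ineq[of 1 \<mu>] assms(1) by (simp add: c_def norm_divide)
  ultimately show ?thesis by blast
qed

lemma smult_one_mult_vec:
  assumes "(v :: complex vec) \<in> carrier_vec n"
  shows "(c \<cdot>\<^sub>m 1\<^sub>m n) *\<^sub>v v = c \<cdot>\<^sub>v v"
proof -
  have "(c \<cdot>\<^sub>m 1\<^sub>m n) *\<^sub>v v = c \<cdot>\<^sub>v (1\<^sub>m n *\<^sub>v v)"
    using assms
    by (intro eq_vecI)
      (auto simp: scalar_prod_def sum_distrib_left mult.assoc simp del: one_mult_mat_vec)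
  then show ?thesis
    using assms by simp
qed

locale rank_one_blocks =
  fixes l :: nat and ns :: "nat \<Rightarrow> nat" and i j :: nat and xi xj :: "complex vec"
    and R :: "complex \<Rightarrow> nat \<Rightarrow> complex mat"
  assumes i: "i < l" and j: "j < l" and i_ne_j: "i \<noteq> j"
    and xi: "xi \<in> carrier_vec (ns i)" and xj: "xj \<in> carrier_vec (ns j)"
    and xi_unit: "vnorm xi = 1" and xj_unit: "vnorm xj = 1"
    and R_def: "\<And>\<mu>. R \<mu> = (\<lambda>k. if k = i then outer xi
                          else if k = j then \<mu> \<cdot>\<^sub>m outer xj
                          else 0\<^sub>m (ns k) (ns k))"
begin

abbreviation R_shift :: "complex \<Rightarrow> complex \<Rightarrow> nat \<Rightarrow> complex mat" where
  "R_shift \<mu> c \<equiv> blk_add (R \<mu>) (blk_smult c (blk_id ns))"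

lemma R_shift_block:
  "R_shift \<mu> c k = (if k = i then 1 \<cdot>\<^sub>m outer xi + c \<cdot>\<^sub>m 1\<^sub>m (ns i)
                    else if k = j then \<mu> \<cdot>\<^sub>m outer xj + c \<cdot>\<^sub>m 1\<^sub>m (ns j)
                    else c \<cdot>\<^sub>m 1\<^sub>m (ns k))"
  using xi i_ne_j
  by (auto simp: R_def blk_add_def blk_smult_def blk_id_def intro!: eq_matI)

lemma R_shift_zero: "R_shift \<mu> 0 = R \<mu>"
  unfolding R_def blk_add_def blk_smult_def blk_id_def using xi xj by (intro ext eq_matI) auto

lemma blk_norm_R_shift_le:
  "blk_norm l (R_shift \<mu> c) \<le> max (cmod (1 + c)) (max (cmod (\<mu> + c)) (cmod c))"
proof (rule blk_norm_le)
  show "0 < l"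
    using i by simp
  fix k
  have "op_norm (c \<cdot>\<^sub>m 1\<^sub>m (ns k)) \<le> cmod c"
    by (rule op_norm_le_scalar) (simp add: smult_one_mult_vec)
  then show "op_norm (R_shift \<mu> c k) \<le> max (cmod (1 + c)) (max (cmod (\<mu> + c)) (cmod c))"
    using op_norm_rank_one_shift_le[OF xi xi_unit, of 1 c]
      op_norm_rank_one_shift_le[OF xj xj_unit, of \<mu> c]
    unfolding R_shift_block by auto
qed

lemma blk_norm_R_shift_ge:
  "cmod (1 + c) \<le> blk_norm l (R_shift \<mu> c)" "cmod (\<mu> + c) \<le> blk_norm l (R_shift \<mu> c)"
  using op_norm_le_blk_norm[OF i, of "R_shift \<mu> c"] op_norm_le_blk_norm[OF j, of "R_shift \<mu> c"]
    norm_add_le_op_norm_rank_one_shift[OF xi xi_unit, of 1 c]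
    norm_add_le_op_norm_rank_one_shift[OF xj xj_unit, of \<mu> c] i_ne_j
  unfolding R_shift_block by auto

lemma blk_norm_R: "cmod \<mu> \<le> 1 \<Longrightarrow> blk_norm l (R \<mu>) = 1"
  using blk_norm_R_shift_le[of \<mu> 0] blk_norm_R_shift_ge(1)[of 0 \<mu>]
  by (simp add: R_shift_zero)

lemma BJ_orth_R_iff:
  "cmod \<mu> \<le> 1 \<Longrightarrow> BJ_orth l (R \<mu>) (blk_id ns) \<longleftrightarrow> (\<forall>c. 1 \<le> blk_norm l (R_shift \<mu> c))"
  by (simp add: BJ_orth_def blk_norm_R)

lemma BJ_orth_R_minus_one: "BJ_orth l (R (-1)) (blk_id ns)"
proof -
  have "1 \<le> blk_norm l (R_shift (-1) c)" for c
    using blk_norm_R_shift_ge[where \<mu> = "-1" and c = c] norm_triangle_ineq4[of "1 + c" "-1 + c"]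
    by simp
  then show ?thesis
    by (simp add: BJ_orth_R_iff)
qed

lemma not_BJ_orth_R:
  assumes "cmod \<mu> = 1" "\<mu> \<noteq> -1"
  shows "\<not> BJ_orth l (R \<mu>) (blk_id ns)"
proof -
  obtain c where "cmod (1 + c) < 1" "cmod (\<mu> + c) < 1" "cmod c < 1"
    using exists_shift_norms_lt_one[OF assms] by blast
  then have "blk_norm l (R_shift \<mu> c) < 1"
    using blk_norm_R_shift_le[of \<mu> c] by simp
  then show ?thesis
    using assms(1) by (auto simp: BJ_orth_R_iff not_le)
qed

end

theorem lemma6p1:
  fixes l :: nat and ns :: "nat \<Rightarrow> nat" and i j :: nat and xi xj :: "complex vec"
    and R :: "complex \<Rightarrow> nat \<Rightarrow> complex mat"
  assumes "\<And>k. k < l \<Longrightarrow> ns k \<ge> 1"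
    and "i < l" and "j < l" and "i \<noteq> j"
    and "xi \<in> carrier_vec (ns i)" and "xj \<in> carrier_vec (ns j)"
    and "op_norm (outer xi) = 1" and "op_norm (outer xj) = 1"
    and "\<And>\<mu>. R \<mu> = (\<lambda>k. if k = i then outer xi
                          else if k = j then \<mu> \<cdot>\<^sub>m outer xj
                          else 0\<^sub>m (ns k) (ns k))"
  shows "{\<mu>. cmod \<mu> = 1 \<and> BJ_orth l (R \<mu>) (blk_id ns)} = {-1}"
proof -
  have "vnorm xi = 1" "vnorm xj = 1"
    using assms(5-8) vnorm_nonneg[of xi] vnorm_nonneg[of xj]
    by (auto simp: op_norm_outer power2_eq_1_iff)
  with assms(2-6,9) interpret rank_one_blocks l ns i j xi xj R
    by unfold_locales
  show ?thesis
    using BJ_orth_R_minus_one not_BJ_orth_R by auto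
qed

end
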